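(* Let $M$ be a finite monoid such that for all $x,y\in M$, either $R(x)\subseteq R(xy)$ or $R(y)\subseteq R(xy)$. Then for all $x,y\in M$ there exists $k\ge1$ such that $(xy)^kx=x$ or $(yx)^ky=y$.
   Context: For $m$ in a monoid $M$, $R(m)=\{my: y\in M\}$ is the right ideal of $m$. *)

theory Defs
  imports Main
begin

definition right_ideal :: "'a::monoid_mult \<Rightarrow> 'a set" where
  "right_ideal m = {m * y | y. True}"

end

theory Submission
  imports Defs
begin

text \<open>
  Call \<open>p\<close> right regular if \<open>p \<in> R(p\<^sup>2)\<close>; the hypothesis (with \<open>a = b = p\<close>) makes every
  element right regular. Then \<open>p \<in> R(p\<^sup>n)\<close> for all \<open>n \<ge> 1\<close>, and since in a finite monoid
  some power \<open>p\<^sup>m\<close> satisfies \<open>p\<^sup>k p\<^sup>m = p\<^sup>m\<close> with \<open>k \<ge> 1\<close>, left multiplication by \<open>p\<^sup>k\<close> fixes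
  \<open>R(p\<^sup>m) \<supseteq> R(p)\<close> pointwise. Finally the hypothesis gives \<open>x \<in> R(xy)\<close> or \<open>y \<in> R(yx)\<close>:
  if \<open>y \<in> R(xy)\<close> and \<open>x \<in> R(yx)\<close>, then \<open>y \<in> R(xy) \<subseteq> R(x) \<subseteq> R(yx)\<close>.
\<close>

lemma mem_right_ideal_iff: "a \<in> right_ideal b \<longleftrightarrow> (\<exists>c. a = b * c)"
  unfolding right_ideal_def by auto

lemma right_ideal_self: "a \<in> right_ideal a"
  unfolding mem_right_ideal_iff by (metis mult_1_right)

lemma mult_in_right_ideal: "a * b \<in> right_ideal a"
  unfolding mem_right_ideal_iff by blast

lemma right_ideal_subset: "a \<in> right_ideal b \<Longrightarrow> right_ideal a \<subseteq> right_ideal b"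
  unfolding right_ideal_def by (auto simp: mult.assoc)

lemma right_ideal_mult_left: "a \<in> right_ideal b \<Longrightarrow> c * a \<in> right_ideal (c * b)"
  unfolding mem_right_ideal_iff by (auto simp: mult.assoc)

lemma finite_power_cycle:
  fixes p :: "'a::{monoid_mult, finite}"
  obtains m k where "k \<ge> 1" "p ^ k * p ^ m = p ^ m"
proof -
  have "\<not> inj (\<lambda>n::nat. p ^ n)"
    using finite_imageD[of "\<lambda>n::nat. p ^ n" UNIV] by auto
  then obtain i j :: nat where "i < j" "p ^ i = p ^ j"
    unfolding inj_def by (metis linorder_neqE_nat)
  then have "p ^ (j - i) * p ^ i = p ^ i"
    by (metis le_add_diff_inverse2 less_imp_le power_add)
  moreover have "j - i \<ge> 1" using \<open>i < j\<close> by simp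
  ultimately show thesis using that by blast
qed

lemma right_regular_in_right_ideal_power:
  assumes "p \<in> right_ideal (p * p)"
  shows "p \<in> right_ideal (p ^ Suc n)"
proof (induction n)
  case 0
  then show ?case by (simp add: right_ideal_self)
next
  case (Suc n)
  have "p ^ Suc n = p ^ n * p" by (simp add: power_commutes)
  also have "\<dots> \<in> right_ideal (p ^ n * (p * p))"
    using right_ideal_mult_left[OF assms] .
  also have "p ^ n * (p * p) = p ^ Suc (Suc n)"
    by (metis mult.assoc power_Suc2)
  finally show ?case
    using Suc.IH right_ideal_subset by blast
qed

lemma right_regular_power_fixes_right_ideal:
  fixes p :: "'a::{monoid_mult, finite}"
  assumes "p \<in> right_ideal (p * p)"
  obtains k where "k \<ge> 1" "\<And>z. z \<in> right_ideal p \<Longrightarrow> p ^ k * z = z"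
proof -
  obtain m k where k: "k \<ge> 1" "p ^ k * p ^ m = p ^ m"
    using finite_power_cycle .
  then have "p ^ k * p ^ Suc m = p ^ Suc m"
    by (metis mult.assoc power_Suc2)
  moreover have "right_ideal p \<subseteq> right_ideal (p ^ Suc m)"
    using right_ideal_subset right_regular_in_right_ideal_power[OF assms] .
  ultimately have "p ^ k * z = z" if "z \<in> right_ideal p" for z
  proof -
    from that \<open>right_ideal p \<subseteq> _\<close> have "z \<in> right_ideal (p ^ Suc m)" by blast
    then obtain c where "z = p ^ Suc m * c"
      unfolding mem_right_ideal_iff by blast
    with \<open>p ^ k * p ^ Suc m = p ^ Suc m\<close> show ?thesis
      by (simp flip: mult.assoc)
  qed
  with k show thesis using that by blast
qed

lemma right_ideal_dichotomy_swap:
  fixes x y :: "'a::monoid_mult"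
  assumes "right_ideal x \<subseteq> right_ideal (x * y) \<or> right_ideal y \<subseteq> right_ideal (x * y)"
    and "right_ideal y \<subseteq> right_ideal (y * x) \<or> right_ideal x \<subseteq> right_ideal (y * x)"
  shows "x \<in> right_ideal (x * y) \<or> y \<in> right_ideal (y * x)"
proof (rule ccontr)
  assume "\<not> ?thesis"
  with assms right_ideal_self have "y \<in> right_ideal (x * y)" "x \<in> right_ideal (y * x)"
    by blast+
  then have "y \<in> right_ideal x"
    using mult_in_right_ideal right_ideal_subset by blast
  then have "y \<in> right_ideal (y * x)"
    using \<open>x \<in> right_ideal (y * x)\<close> right_ideal_subset by blast
  with \<open>\<not> ?thesis\<close> show False by blast
qed

theorem lemmaB2:
  fixes x y :: "'a::{monoid_mult, finite}"
  assumes hyp: "\<And>a b :: 'a. right_ideal a \<subseteq> right_ideal (a * b) \<or> right_ideal b \<subseteq> right_ideal (a * b)"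
  shows "\<exists>k::nat. k \<ge> 1 \<and> ((x * y) ^ k * x = x \<or> (y * x) ^ k * y = y)"
proof -
  have regular: "p \<in> right_ideal (p * p)" for p :: 'a
    using hyp[of p p] right_ideal_self by blast
  consider "x \<in> right_ideal (x * y)" | "y \<in> right_ideal (y * x)"
    using right_ideal_dichotomy_swap[OF hyp hyp] by blast
  then show ?thesis
  proof cases
    case 1
    obtain k where "k \<ge> 1" "(x * y) ^ k * x = x"
      using right_regular_power_fixes_right_ideal[OF regular, of "x * y"] 1 by metis
    then show ?thesis by blast
  next
    case 2
    obtain k where "k \<ge> 1" "(y * x) ^ k * y = y"
      using right_regular_power_fixes_right_ideal[OF regular, of "y * x"] 2 by metis
    then show ?thesis by blast
  qed
qed

end
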